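(* Let $k$ be a field, $Q$ a finite quiver with vertex set $Q_0$ and arrow set $Q_1$, $kQ$ its path algebra, and $X$ a $kQ$-bimodule which is finite dimensional over $k$. Then $$\dim_k H^1(kQ,X)=\dim_k(X^{kQ})-\dim_k(X^{kQ_0})+\sum_{x,y\in Q_0}|yQ_1x|\,\dim_k(yXx),$$ where $yQ_1x$ is the set of arrows from $x$ to $y$.
   Context: $H^1(kQ,X)$ is the first Hochschild cohomology of $kQ$ with coefficients in $X$ (derivations $kQ\to X$ modulo inner derivations). The path algebra $kQ$ has basis the paths of $Q$ (including the vertices as length-zero paths), multiplication given by concatenation when possible and $0$ otherwise; vertices are orthogonal idempotents summing to $1$. $kQ_0\subseteq kQ$ is the subalgebra spanned by the vertices. For a subalgebra $A$, $X^A=\{x\in X\mid ax=xa\ \forall a\in A\}$. For vertices $x,y$, $yXx$ denotes the subspace $y\cdot X\cdot x$. *)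

theory Defs
  imports Complex_Main "HOL-Library.Function_Algebras"
begin

text \<open>A path is a pair (v, as): start vertex v and the list of arrows as in order of traversal.\<close>

definition quiver :: "'v set \<Rightarrow> 'a set \<Rightarrow> ('a \<Rightarrow> 'v) \<Rightarrow> ('a \<Rightarrow> 'v) \<Rightarrow> bool" where
  "quiver V Ar src tgt \<longleftrightarrow> finite V \<and> finite Ar \<and> src ` Ar \<subseteq> V \<and> tgt ` Ar \<subseteq> V"

fun chain_from :: "('a \<Rightarrow> 'v) \<Rightarrow> ('a \<Rightarrow> 'v) \<Rightarrow> 'v \<Rightarrow> 'a list \<Rightarrow> bool" where
  "chain_from src tgt v [] = True"
| "chain_from src tgt v (a # as) = (src a = v \<and> chain_from src tgt (tgt a) as)"

definition valid_path :: "'v set \<Rightarrow> 'a set \<Rightarrow> ('a \<Rightarrow> 'v) \<Rightarrow> ('a \<Rightarrow> 'v) \<Rightarrow> 'v \<times> 'a list \<Rightarrow> bool" where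
  "valid_path V Ar src tgt p \<longleftrightarrow> fst p \<in> V \<and> set (snd p) \<subseteq> Ar \<and> chain_from src tgt (fst p) (snd p)"

definition path_end :: "('a \<Rightarrow> 'v) \<Rightarrow> 'v \<times> 'a list \<Rightarrow> 'v" where
  "path_end tgt p = (if snd p = [] then fst p else tgt (last (snd p)))"

text \<open>Product of paths p * q ("p after q"): defined (nonzero) iff q ends where p starts.\<close>
definition composable :: "('a \<Rightarrow> 'v) \<Rightarrow> 'v \<times> 'a list \<Rightarrow> 'v \<times> 'a list \<Rightarrow> bool" where
  "composable tgt p q \<longleftrightarrow> path_end tgt q = fst p"

definition path_comp :: "'v \<times> 'a list \<Rightarrow> 'v \<times> 'a list \<Rightarrow> 'v \<times> 'a list" where
  "path_comp p q = (fst q, snd q @ snd p)"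

text \<open>Elements of kQ: finitely supported k-valued functions on the valid paths
(coefficients with respect to the path basis).\<close>

definition pathalg :: "'v set \<Rightarrow> 'a set \<Rightarrow> ('a \<Rightarrow> 'v) \<Rightarrow> ('a \<Rightarrow> 'v) \<Rightarrow> ('v \<times> 'a list \<Rightarrow> 'k::field) set" where
  "pathalg V Ar src tgt = {f. finite {p. f p \<noteq> 0} \<and> (\<forall>p. f p \<noteq> 0 \<longrightarrow> valid_path V Ar src tgt p)}"

definition pa_add :: "('v \<times> 'a list \<Rightarrow> 'k::field) \<Rightarrow> ('v \<times> 'a list \<Rightarrow> 'k) \<Rightarrow> ('v \<times> 'a list \<Rightarrow> 'k)" where
  "pa_add f g = (\<lambda>p. f p + g p)"

definition pa_scale :: "'k::field \<Rightarrow> ('v \<times> 'a list \<Rightarrow> 'k) \<Rightarrow> ('v \<times> 'a list \<Rightarrow> 'k)" where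
  "pa_scale c f = (\<lambda>p. c * f p)"

definition pa_mult :: "('a \<Rightarrow> 'v) \<Rightarrow> ('v \<times> 'a list \<Rightarrow> 'k::field) \<Rightarrow> ('v \<times> 'a list \<Rightarrow> 'k) \<Rightarrow> ('v \<times> 'a list \<Rightarrow> 'k)" where
  "pa_mult tgt f g = (\<lambda>r. \<Sum>(p, q) \<in> {(p, q). f p \<noteq> 0 \<and> g q \<noteq> 0 \<and> composable tgt p q \<and> path_comp p q = r}.
                        f p * g q)"

definition vtx :: "'v \<Rightarrow> ('v \<times> 'a list \<Rightarrow> 'k::field)" where
  "vtx v = (\<lambda>p. if p = (v, []) then 1 else 0)"

definition pa_one :: "'v set \<Rightarrow> ('v \<times> 'a list \<Rightarrow> 'k::field)" where
  "pa_one V = (\<lambda>p. if fst p \<in> V \<and> snd p = [] then 1 else 0)"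

definition vertex_subalg :: "'v set \<Rightarrow> 'a set \<Rightarrow> ('a \<Rightarrow> 'v) \<Rightarrow> ('a \<Rightarrow> 'v) \<Rightarrow> ('v \<times> 'a list \<Rightarrow> 'k::field) set" where
  "vertex_subalg V Ar src tgt = {f \<in> pathalg V Ar src tgt. \<forall>p. f p \<noteq> 0 \<longrightarrow> snd p = []}"

text \<open>X is the type 'x, a k-vector space via sc, with left action lact and right action ract
of kQ (the actions are only constrained on elements of kQ).\<close>

definition pa_bimodule ::
  "'v set \<Rightarrow> 'a set \<Rightarrow> ('a \<Rightarrow> 'v) \<Rightarrow> ('a \<Rightarrow> 'v) \<Rightarrow> ('k::field \<Rightarrow> 'x::ab_group_add \<Rightarrow> 'x)
   \<Rightarrow> (('v \<times> 'a list \<Rightarrow> 'k) \<Rightarrow> 'x \<Rightarrow> 'x) \<Rightarrow> ('x \<Rightarrow> ('v \<times> 'a list \<Rightarrow> 'k) \<Rightarrow> 'x) \<Rightarrow> bool" where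
  "pa_bimodule V Ar src tgt sc lact ract \<longleftrightarrow>
     (let A = pathalg V Ar src tgt in
      vector_space sc
      \<and> (\<forall>f\<in>A. \<forall>m n. lact f (m + n) = lact f m + lact f n \<and> ract (m + n) f = ract m f + ract n f)
      \<and> (\<forall>f\<in>A. \<forall>g\<in>A. \<forall>m. lact (pa_add f g) m = lact f m + lact g m \<and> ract m (pa_add f g) = ract m f + ract m g)
      \<and> (\<forall>f\<in>A. \<forall>c m. lact (pa_scale c f) m = sc c (lact f m) \<and> lact f (sc c m) = sc c (lact f m)
                    \<and> ract m (pa_scale c f) = sc c (ract m f) \<and> ract (sc c m) f = sc c (ract m f))
      \<and> (\<forall>f\<in>A. \<forall>g\<in>A. \<forall>m. lact (pa_mult tgt f g) m = lact f (lact g m)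
                        \<and> ract m (pa_mult tgt f g) = ract (ract m f) g
                        \<and> ract (lact f m) g = lact f (ract m g))
      \<and> (\<forall>m. lact (pa_one V) m = m \<and> ract m (pa_one V) = m))"

definition fin_dim :: "('k::field \<Rightarrow> 'x::ab_group_add \<Rightarrow> 'x) \<Rightarrow> bool" where
  "fin_dim sc \<longleftrightarrow> (\<exists>B. finite B \<and> module.span sc B = UNIV)"

definition invariants :: "('f \<Rightarrow> 'x \<Rightarrow> 'x) \<Rightarrow> ('x \<Rightarrow> 'f \<Rightarrow> 'x) \<Rightarrow> 'f set \<Rightarrow> 'x set" where
  "invariants lact ract B = {m. \<forall>a\<in>B. lact a m = ract m a}"

definition corner :: "('v \<Rightarrow> 'f) \<Rightarrow> ('f \<Rightarrow> 'x \<Rightarrow> 'x) \<Rightarrow> ('x \<Rightarrow> 'f \<Rightarrow> 'x) \<Rightarrow> 'v \<Rightarrow> 'v \<Rightarrow> 'x set" where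
  "corner e lact ract y x = {lact (e y) (ract m (e x)) | m. True}"

text \<open>Derivations kQ \<rightarrow> X (k-linear maps with the Leibniz rule), taken extensionally
(value 0 outside kQ), and inner derivations a \<mapsto> a m - m a.\<close>

definition derivations :: "'v set \<Rightarrow> 'a set \<Rightarrow> ('a \<Rightarrow> 'v) \<Rightarrow> ('a \<Rightarrow> 'v) \<Rightarrow> ('k::field \<Rightarrow> 'x::ab_group_add \<Rightarrow> 'x)
   \<Rightarrow> (('v \<times> 'a list \<Rightarrow> 'k) \<Rightarrow> 'x \<Rightarrow> 'x) \<Rightarrow> ('x \<Rightarrow> ('v \<times> 'a list \<Rightarrow> 'k) \<Rightarrow> 'x)
   \<Rightarrow> (('v \<times> 'a list \<Rightarrow> 'k) \<Rightarrow> 'x) set" where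
  "derivations V Ar src tgt sc lact ract =
     (let A = pathalg V Ar src tgt in
      {D. (\<forall>f. f \<notin> A \<longrightarrow> D f = 0)
        \<and> (\<forall>f\<in>A. \<forall>g\<in>A. D (pa_add f g) = D f + D g)
        \<and> (\<forall>f\<in>A. \<forall>c. D (pa_scale c f) = sc c (D f))
        \<and> (\<forall>f\<in>A. \<forall>g\<in>A. D (pa_mult tgt f g) = ract (D f) g + lact f (D g))})"

definition inner_derivations :: "'v set \<Rightarrow> 'a set \<Rightarrow> ('a \<Rightarrow> 'v) \<Rightarrow> ('a \<Rightarrow> 'v)
   \<Rightarrow> (('v \<times> 'a list \<Rightarrow> 'k::field) \<Rightarrow> 'x::ab_group_add \<Rightarrow> 'x) \<Rightarrow> ('x \<Rightarrow> ('v \<times> 'a list \<Rightarrow> 'k) \<Rightarrow> 'x)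
   \<Rightarrow> (('v \<times> 'a list \<Rightarrow> 'k) \<Rightarrow> 'x) set" where
  "inner_derivations V Ar src tgt lact ract =
     {(\<lambda>f. if f \<in> pathalg V Ar src tgt then lact f m - ract m f else 0) | m. True}"

definition fun_scale :: "('k \<Rightarrow> 'x \<Rightarrow> 'x) \<Rightarrow> 'k \<Rightarrow> ('b \<Rightarrow> 'x) \<Rightarrow> ('b \<Rightarrow> 'x)" where
  "fun_scale sc c D = (\<lambda>f. sc c (D f))"

text \<open>dim_k H^1(kQ,X) = dim_k (Der / Inn) = dim Der - dim Inn (Inn is a subspace of Der,
both finite dimensional when X is).\<close>
definition H1_dim :: "'v set \<Rightarrow> 'a set \<Rightarrow> ('a \<Rightarrow> 'v) \<Rightarrow> ('a \<Rightarrow> 'v) \<Rightarrow> ('k::field \<Rightarrow> 'x::ab_group_add \<Rightarrow> 'x)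
   \<Rightarrow> (('v \<times> 'a list \<Rightarrow> 'k) \<Rightarrow> 'x \<Rightarrow> 'x) \<Rightarrow> ('x \<Rightarrow> ('v \<times> 'a list \<Rightarrow> 'k) \<Rightarrow> 'x) \<Rightarrow> int" where
  "H1_dim V Ar src tgt sc lact ract =
     int (vector_space.dim (fun_scale sc) (derivations V Ar src tgt sc lact ract))
     - int (vector_space.dim (fun_scale sc) (inner_derivations V Ar src tgt lact ract))"

end

theory Submission
  imports Defs
begin

text \<open>Restriction to the vertices maps the derivations and the inner derivations of \<open>kQ\<close> onto
  the same space, because every derivation agrees on the vertices with an inner one. A derivation
  vanishing on the vertices is determined by its values on the arrows, and its value on an arrow
  \<open>x \<rightarrow> y\<close> lies in the corner \<open>e\<^sub>y X e\<^sub>x\<close>; conversely, corner-valued data on the arrows extends to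
  such a derivation through the Leibniz rule along paths. Hence \<open>dim Der\<close> is the dimension of the
  restricted inner derivations plus the sum of the dimensions of the corners of the arrows, and
  rank-nullity for \<open>m \<mapsto> (a \<mapsto> a m - m a)\<close>, whose kernel is \<open>X\<^bsup>kQ\<^esup>\<close>, and for its restriction
  to the vertices, whose kernel is \<open>X\<^bsup>kQ\<^sub>0\<^esup>\<close>, expresses both of these through \<open>dim X\<close>.\<close>

section \<open>Dimensions in possibly infinite dimensional vector spaces\<close>

definition finitely_spanned :: "('k::field \<Rightarrow> 'x::ab_group_add \<Rightarrow> 'x) \<Rightarrow> 'x set \<Rightarrow> bool" where
  "finitely_spanned s S \<longleftrightarrow> (\<exists>F. finite F \<and> S \<subseteq> module.span s F)"

context vector_space begin

lemma finite_basis_exists: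
  assumes "finitely_spanned scale S"
  obtains B where "finite B" "B \<subseteq> S" "independent B" "S \<subseteq> span B" "card B = dim S"
proof -
  obtain F where F: "finite F" "S \<subseteq> span F" using assms by (auto simp: finitely_spanned_def)
  obtain B where B: "B \<subseteq> S" "independent B" "S \<subseteq> span B" "card B = dim S"
    using basis_exists by blast
  have "finite B" using independent_span_bound[OF F(1) B(2)] B(1) F(2) by blast
  with B that show ?thesis by blast
qed

lemma dim_zero_singleton: "dim {0} = 0"
  using dim_le_card[of "{0}" "{}"] by simp

end

context vector_space_pair begin

lemma finitely_spanned_image:
  "Vector_Spaces.linear s1 s2 f \<Longrightarrow> finitely_spanned s1 S \<Longrightarrow> finitely_spanned s2 (f ` S)"
  unfolding finitely_spanned_def by (meson finite_imageI linear_spans_image)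

text \<open>Rank-nullity without assuming the ambient spaces finite dimensional (the spaces of maps
  used below are not): a basis of the kernel together with lifts of a basis of the image is a
  basis of \<open>S\<close>.\<close>

lemma lifted_basis_spans:
  assumes lin: "Vector_Spaces.linear s1 s2 f" and S: "vs1.subspace S"
    and K: "S \<inter> {x. f x = 0} \<subseteq> vs1.span K" and C: "finite C" "f ` S \<subseteq> vs2.span C"
    and g: "\<And>c. c \<in> C \<Longrightarrow> g c \<in> S \<and> f (g c) = c"
  shows "S \<subseteq> vs1.span (K \<union> g ` C)"
proof
  fix x assume x: "x \<in> S"
  then obtain u where u: "f x = (\<Sum>c\<in>C. s2 (u c) c)"
    using C vs2.span_finite[OF C(1)] by blast
  define y where "y = (\<Sum>c\<in>C. s1 (u c) (g c))"
  have yS: "y \<in> S"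
    unfolding y_def using g by (intro vs1.subspace_sum[OF S] vs1.subspace_scale[OF S]) auto
  have "f (x - y) = 0"
    using u g by (simp add: y_def linear_diff[OF lin] linear_sum[OF lin] linear_scale[OF lin])
  then have "x - y \<in> vs1.span (K \<union> g ` C)"
    using K vs1.subspace_diff[OF S x yS] vs1.span_mono[of K "K \<union> g ` C"] by blast
  moreover have "y \<in> vs1.span (K \<union> g ` C)"
    unfolding y_def by (intro vs1.span_sum vs1.span_scale vs1.span_base) auto
  ultimately show "x \<in> vs1.span (K \<union> g ` C)"
    using vs1.span_add by fastforce
qed

lemma lifted_basis_independent:
  assumes lin: "Vector_Spaces.linear s1 s2 f"
    and K: "finite K" "vs1.independent K" "\<And>k. k \<in> K \<Longrightarrow> f k = 0"
    and C: "finite C" "vs2.independent C"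
    and g: "\<And>c. c \<in> C \<Longrightarrow> f (g c) = c"
  shows "vs1.independent (K \<union> g ` C)" and "K \<inter> g ` C = {}" and "inj_on g C"
proof -
  show inj: "inj_on g C" by (metis g inj_onI)
  have "0 \<notin> C" using C(2) vs2.dependent_zero by blast
  then show disj: "K \<inter> g ` C = {}"
    using K(3) g by force
  show "vs1.independent (K \<union> g ` C)"
  proof (rule vs1.independent_if_scalars_zero)
    show "finite (K \<union> g ` C)" using K(1) C(1) by simp
    fix u x assume sum0: "(\<Sum>x\<in>K \<union> g ` C. s1 (u x) x) = 0" and x: "x \<in> K \<union> g ` C"
    have split: "(\<Sum>x\<in>K \<union> g ` C. s1 (u x) x) = (\<Sum>x\<in>K. s1 (u x) x) + (\<Sum>c\<in>C. s1 (u (g c)) (g c))"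
      using K(1) C(1) disj by (simp add: sum.union_disjoint sum.reindex[OF inj])
    have "f (\<Sum>x\<in>K. s1 (u x) x) = 0"
      using K(3) by (simp add: linear_sum[OF lin] linear_scale[OF lin])
    then have "(\<Sum>c\<in>C. s2 (u (g c)) c) = 0"
      using arg_cong[OF sum0, of f] g
      by (simp add: split linear_add[OF lin] linear_sum[OF lin] linear_scale[OF lin] linear_0[OF lin])
    then have uC: "\<forall>c\<in>C. u (g c) = 0"
      using vs2.independentD[OF C(2) C(1) subset_refl, of "\<lambda>c. u (g c)"] by blast
    then have "(\<Sum>x\<in>K. s1 (u x) x) = 0" using split sum0 by simp
    then have "\<forall>k\<in>K. u k = 0" using vs1.independentD[OF K(2) K(1) subset_refl] by blast
    with uC x show "u x = 0" by blast
  qed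
qed

lemma rank_nullity:
  assumes lin: "Vector_Spaces.linear s1 s2 f" and S: "vs1.subspace S"
    and ker: "finitely_spanned s1 (S \<inter> {x. f x = 0})"
    and img: "finitely_spanned s2 (f ` S)"
  shows "vs1.dim S = vs2.dim (f ` S) + vs1.dim (S \<inter> {x. f x = 0})"
    and "finitely_spanned s1 S"
proof -
  obtain K where K: "finite K" "K \<subseteq> S \<inter> {x. f x = 0}" "vs1.independent K"
      "S \<inter> {x. f x = 0} \<subseteq> vs1.span K" "card K = vs1.dim (S \<inter> {x. f x = 0})"
    using vs1.finite_basis_exists[OF ker] by blast
  obtain C where C: "finite C" "C \<subseteq> f ` S" "vs2.independent C"
      "f ` S \<subseteq> vs2.span C" "card C = vs2.dim (f ` S)"
    using vs2.finite_basis_exists[OF img] by blast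
  obtain g where g: "\<And>c. c \<in> C \<Longrightarrow> g c \<in> S \<and> f (g c) = c"
    using C(2) by (metis f_inv_into_f inv_into_into subsetD)
  have fK: "\<And>k. k \<in> K \<Longrightarrow> f k = 0" using K(2) by blast
  have fg: "\<And>c. c \<in> C \<Longrightarrow> f (g c) = c" using g by blast
  note ind = lifted_basis_independent[OF lin K(1,3) fK C(1,3) fg]
  have spans: "S \<subseteq> vs1.span (K \<union> g ` C)"
    using lifted_basis_spans[OF lin S K(4) C(1,4)] g by blast
  have "vs1.dim S = card (K \<union> g ` C)"
    using vs1.basis_card_eq_dim[OF _ spans ind(1)] K(2) g by (metis Un_least image_subsetI le_infE)
  also have "\<dots> = card K + card C"
    using K(1) C(1) ind(2,3) by (simp add: card_Un_disjoint card_image)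
  finally show "vs1.dim S = vs2.dim (f ` S) + vs1.dim (S \<inter> {x. f x = 0})"
    using K(5) C(5) by simp
  show "finitely_spanned s1 S"
    unfolding finitely_spanned_def using spans K(1) C(1) by (intro exI[of _ "K \<union> g ` C"]) simp
qed

end

lemma vector_space_fun_scale: "vector_space s \<Longrightarrow> vector_space (fun_scale s)"
  unfolding vector_space_def fun_scale_def by (simp add: fun_eq_iff)

lemma linear_evaluation:
  assumes "vector_space s"
  shows "Vector_Spaces.linear (fun_scale s) s (\<lambda>w. w a)"
  using assms vector_space_fun_scale[OF assms]
  by (simp add: Vector_Spaces.linear_iff fun_scale_def)

lemma linear_sampling:
  assumes "vector_space s"
  shows "Vector_Spaces.linear (fun_scale s) (fun_scale s) (\<lambda>D i. if i \<in> I then D (g i) else 0)"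
proof -
  interpret vector_space s by fact
  show ?thesis
    using assms by (simp add: Vector_Spaces.linear_iff fun_scale_def fun_eq_iff vector_space_fun_scale)
qed

definition Pi_zero :: "'i set \<Rightarrow> ('i \<Rightarrow> 'x set) \<Rightarrow> ('i \<Rightarrow> 'x::zero) set" where
  "Pi_zero I S = {w. (\<forall>i\<in>I. w i \<in> S i) \<and> (\<forall>i. i \<notin> I \<longrightarrow> w i = 0)}"

lemma subspace_Pi_zero:
  assumes vs: "vector_space s" and S: "\<And>i. i \<in> I \<Longrightarrow> module.subspace s (S i)"
  shows "module.subspace (fun_scale s) (Pi_zero I S)"
proof -
  interpret vector_space s by fact
  interpret F: vector_space "fun_scale s" by (rule vector_space_fun_scale[OF vs])
  show ?thesis
    using S subspace_0 subspace_add subspace_scale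
    by (intro F.subspaceI) (auto simp: Pi_zero_def fun_scale_def)
qed

lemma dim_Pi_zero:
  fixes s :: "'k::field \<Rightarrow> 'x::ab_group_add \<Rightarrow> 'x" and S :: "'i \<Rightarrow> 'x set"
  assumes vs: "vector_space s" and "finite I"
    and "\<And>i. i \<in> I \<Longrightarrow> module.subspace s (S i) \<and> finitely_spanned s (S i)"
  shows "vector_space.dim (fun_scale s) (Pi_zero I S) = (\<Sum>i\<in>I. vector_space.dim s (S i))"
    and "finitely_spanned (fun_scale s) (Pi_zero I S)"
proof -
  have "vector_space.dim (fun_scale s) (Pi_zero I S) = (\<Sum>i\<in>I. vector_space.dim s (S i))
         \<and> finitely_spanned (fun_scale s) (Pi_zero I S)"
    using assms(2,3)
  proof (induction I rule: finite_induct)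
    case empty
    interpret F: vector_space "fun_scale s :: 'k \<Rightarrow> ('i \<Rightarrow> 'x) \<Rightarrow> _"
      by (rule vector_space_fun_scale[OF vs])
    have "Pi_zero {} S = {0}" by (auto simp: Pi_zero_def fun_eq_iff)
    then show ?case
      unfolding finitely_spanned_def
      by (auto simp: F.dim_zero_singleton intro!: exI[of _ "{}"] F.span_zero)
  next
    case (insert a I)
    interpret vector_space s by fact
    interpret F: vector_space "fun_scale s :: 'k \<Rightarrow> ('i \<Rightarrow> 'x) \<Rightarrow> _"
      by (rule vector_space_fun_scale[OF vs])
    interpret vector_space_pair "fun_scale s :: 'k \<Rightarrow> ('i \<Rightarrow> 'x) \<Rightarrow> _" s ..
    let ?P = "Pi_zero (insert a I) S"
    have ker: "?P \<inter> {w. w a = 0} = Pi_zero I S"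
      using insert.hyps insert.prems subspace_0 by (auto simp: Pi_zero_def) metis
    have img: "(\<lambda>w. w a) ` ?P = S a"
    proof
      show "(\<lambda>w. w a) ` ?P \<subseteq> S a" by (auto simp: Pi_zero_def)
      show "S a \<subseteq> (\<lambda>w. w a) ` ?P"
      proof
        fix c assume "c \<in> S a"
        then have "(\<lambda>i. if i = a then c else 0) \<in> ?P"
          using insert.prems subspace_0 by (auto simp: Pi_zero_def)
        then show "c \<in> (\<lambda>w. w a) ` ?P" by (rule rev_image_eqI) simp
      qed
    qed
    note IH = insert.IH[OF insert.prems]
    note rn = rank_nullity[OF linear_evaluation[OF vs] subspace_Pi_zero[OF vs],
        of "insert a I" S a, unfolded ker img]
    show ?case
      using rn IH insert.hyps insert.prems by simp
  qed
  then show "vector_space.dim (fun_scale s) (Pi_zero I S) = (\<Sum>i\<in>I. vector_space.dim s (S i))"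
    and "finitely_spanned (fun_scale s) (Pi_zero I S)"
    by simp_all
qed

definition pa_supp :: "('p \<Rightarrow> 'k::zero) \<Rightarrow> 'p set" where
  "pa_supp f = {p. f p \<noteq> 0}"

definition path_basis :: "'v \<times> 'a list \<Rightarrow> 'v \<times> 'a list \<Rightarrow> 'k::field" where
  "path_basis p = (\<lambda>q. if q = p then 1 else 0)"

lemma vtx_eq_path_basis: "vtx v = path_basis (v, [])"
  by (simp add: vtx_def path_basis_def fun_eq_iff)

lemma pa_add_eq_plus: "pa_add f g = f + g"
  by (simp add: pa_add_def fun_eq_iff)

lemma pa_scale_zero [simp]: "pa_scale 0 f = 0"
  by (simp add: pa_scale_def fun_eq_iff)

lemma chain_from_append:
  "chain_from src tgt v (as @ bs) \<longleftrightarrow>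
     chain_from src tgt v as \<and> chain_from src tgt (path_end tgt (v, as)) bs"
  by (induction as arbitrary: v) (auto simp: path_end_def)

lemma path_end_Cons: "path_end tgt (v, a # as) = path_end tgt (tgt a, as)"
  by (simp add: path_end_def)

lemma valid_path_comp:
  assumes "valid_path V Ar src tgt p" "valid_path V Ar src tgt q" "composable tgt p q"
  shows "valid_path V Ar src tgt (path_comp p q)"
  using assms by (auto simp: valid_path_def path_comp_def composable_def chain_from_append)

lemma pa_mult_path_basis:
  "pa_mult tgt (path_basis p) (path_basis q :: _ \<Rightarrow> 'k::field) =
     (if composable tgt p q then path_basis (path_comp p q) else 0)"
proof (rule ext)
  fix r
  have "{(p', q'). path_basis p p' \<noteq> (0::'k) \<and> path_basis q q' \<noteq> (0::'k)
            \<and> composable tgt p' q' \<and> path_comp p' q' = r}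
        = (if composable tgt p q \<and> path_comp p q = r then {(p, q)} else {})"
    by (auto simp: path_basis_def)
  then show "pa_mult tgt (path_basis p) (path_basis q :: _ \<Rightarrow> 'k) r =
      (if composable tgt p q then path_basis (path_comp p q) else 0) r"
    unfolding pa_mult_def by (auto simp: path_basis_def)
qed

lemma sum_apply: "(\<Sum>i\<in>I. h i) x = (\<Sum>i\<in>I. h i x)"
  by (induction I rule: infinite_finite_induct) auto

lemma pa_expand:
  assumes "finite P" "pa_supp f \<subseteq> P"
  shows "f = (\<Sum>p\<in>P. pa_scale (f p) (path_basis p))"
proof (rule ext)
  fix q
  have "(\<Sum>p\<in>P. pa_scale (f p) (path_basis p)) q = (\<Sum>p\<in>P. if q = p then f p else 0)"
    by (simp add: sum_apply pa_scale_def path_basis_def if_distrib[of "times _"] cong: if_cong)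
  also have "\<dots> = f q" using assms by (auto simp: pa_supp_def)
  finally show "f q = (\<Sum>p\<in>P. pa_scale (f p) (path_basis p)) q" by simp
qed

lemma pa_mult_expand:
  fixes f g :: "'v \<times> 'a list \<Rightarrow> 'k::field"
  assumes "finite (pa_supp f)" "finite (pa_supp g)"
  shows "pa_mult tgt f g = (\<Sum>p\<in>pa_supp f. \<Sum>q\<in>pa_supp g.
            pa_scale (f p * g q) (pa_mult tgt (path_basis p) (path_basis q)))"
proof (rule ext)
  fix r
  let ?P = "\<lambda>(p, q). composable tgt p q \<and> path_comp p q = r"
  have "(\<Sum>p\<in>pa_supp f. \<Sum>q\<in>pa_supp g.
            pa_scale (f p * g q) (pa_mult tgt (path_basis p) (path_basis q))) r
      = (\<Sum>x\<in>pa_supp f \<times> pa_supp g. if ?P x then f (fst x) * g (snd x) else 0)"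
    unfolding pa_mult_path_basis sum.cartesian_product sum_apply
    by (intro sum.cong) (simp_all add: pa_scale_def path_basis_def split: prod.splits)
  also have "\<dots> = (\<Sum>x\<in>{x \<in> pa_supp f \<times> pa_supp g. ?P x}. f (fst x) * g (snd x))"
    using assms by (simp add: sum.inter_filter)
  also have "{x \<in> pa_supp f \<times> pa_supp g. ?P x} =
      {(p, q). f p \<noteq> 0 \<and> g q \<noteq> 0 \<and> composable tgt p q \<and> path_comp p q = r}"
    by (auto simp: pa_supp_def)
  finally show "pa_mult tgt f g r = (\<Sum>p\<in>pa_supp f. \<Sum>q\<in>pa_supp g.
            pa_scale (f p * g q) (pa_mult tgt (path_basis p) (path_basis q))) r"
    by (simp add: pa_mult_def case_prod_beta)
qed

locale path_algebra_bimodule =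
  fixes V :: "'v set" and Ar :: "'a set" and src tgt :: "'a \<Rightarrow> 'v"
    and sc :: "'k::field \<Rightarrow> 'x::ab_group_add \<Rightarrow> 'x"
    and lact :: "('v \<times> 'a list \<Rightarrow> 'k) \<Rightarrow> 'x \<Rightarrow> 'x"
    and ract :: "'x \<Rightarrow> ('v \<times> 'a list \<Rightarrow> 'k) \<Rightarrow> 'x"
  assumes quiver: "quiver V Ar src tgt"
    and bimodule: "pa_bimodule V Ar src tgt sc lact ract"
begin

abbreviation "A \<equiv> pathalg V Ar src tgt :: ('v \<times> 'a list \<Rightarrow> 'k) set"
abbreviation "valid \<equiv> valid_path V Ar src tgt"
abbreviation "mul \<equiv> pa_mult tgt :: ('v \<times> 'a list \<Rightarrow> 'k) \<Rightarrow> _"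
abbreviation "e \<equiv> vtx :: 'v \<Rightarrow> 'v \<times> 'a list \<Rightarrow> 'k"
abbreviation "b \<equiv> path_basis :: 'v \<times> 'a list \<Rightarrow> 'v \<times> 'a list \<Rightarrow> 'k"

sublocale X: vector_space sc
  using bimodule by (simp add: pa_bimodule_def Let_def)

lemma lact_add: "f \<in> A \<Longrightarrow> lact f (m + n) = lact f m + lact f n"
  and ract_add: "f \<in> A \<Longrightarrow> ract (m + n) f = ract m f + ract n f"
  and lact_plus: "f \<in> A \<Longrightarrow> g \<in> A \<Longrightarrow> lact (f + g) m = lact f m + lact g m"
  and ract_plus: "f \<in> A \<Longrightarrow> g \<in> A \<Longrightarrow> ract m (f + g) = ract m f + ract m g"
  and lact_pa_scale: "f \<in> A \<Longrightarrow> lact (pa_scale c f) m = sc c (lact f m)"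
  and lact_scale: "f \<in> A \<Longrightarrow> lact f (sc c m) = sc c (lact f m)"
  and ract_pa_scale: "f \<in> A \<Longrightarrow> ract m (pa_scale c f) = sc c (ract m f)"
  and ract_scale: "f \<in> A \<Longrightarrow> ract (sc c m) f = sc c (ract m f)"
  and lact_mul: "f \<in> A \<Longrightarrow> g \<in> A \<Longrightarrow> lact (mul f g) m = lact f (lact g m)"
  and ract_mul: "f \<in> A \<Longrightarrow> g \<in> A \<Longrightarrow> ract m (mul f g) = ract (ract m f) g"
  and lact_ract: "f \<in> A \<Longrightarrow> g \<in> A \<Longrightarrow> lact f (ract m g) = ract (lact f m) g"
  and lact_one: "lact (pa_one V) m = m"
  using bimodule by (simp_all add: pa_bimodule_def Let_def pa_add_eq_plus)

lemma finite_V: "finite V" and finite_Ar: "finite Ar"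
  and src_in_V: "\<alpha> \<in> Ar \<Longrightarrow> src \<alpha> \<in> V" and tgt_in_V: "\<alpha> \<in> Ar \<Longrightarrow> tgt \<alpha> \<in> V"
  using quiver by (auto simp: quiver_def)

lemma valid_Cons_iff:
  "valid (v, \<alpha> # as) \<longleftrightarrow> \<alpha> \<in> Ar \<and> src \<alpha> = v \<and> valid (tgt \<alpha>, as)"
  by (auto simp: valid_path_def src_in_V tgt_in_V)

lemma valid_path_end: "valid p \<Longrightarrow> path_end tgt p \<in> V"
  using last_in_set[of "snd p"] by (auto simp: path_end_def valid_path_def intro!: tgt_in_V)

lemma pathalg_iff: "f \<in> A \<longleftrightarrow> finite (pa_supp f) \<and> (\<forall>p\<in>pa_supp f. valid p)"
  by (auto simp: pathalg_def pa_supp_def)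

lemma zero_in_pathalg [simp]: "0 \<in> A"
  by (simp add: pathalg_iff pa_supp_def)

lemma path_basis_in_pathalg: "valid p \<Longrightarrow> b p \<in> A"
  by (auto simp: pathalg_def path_basis_def)

lemma vtx_in_pathalg: "v \<in> V \<Longrightarrow> e v \<in> A"
  by (simp add: vtx_eq_path_basis path_basis_in_pathalg valid_path_def)

lemma plus_in_pathalg: "f \<in> A \<Longrightarrow> g \<in> A \<Longrightarrow> f + g \<in> A"
proof -
  assume "f \<in> A" "g \<in> A"
  moreover have "pa_supp (f + g) \<subseteq> pa_supp f \<union> pa_supp g" by (auto simp: pa_supp_def)
  ultimately show ?thesis unfolding pathalg_iff by (meson Un_iff finite_UnI finite_subset subsetD)
qed

lemma pa_scale_in_pathalg: "f \<in> A \<Longrightarrow> pa_scale c f \<in> A"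
proof -
  assume "f \<in> A"
  moreover have "pa_supp (pa_scale c f) \<subseteq> pa_supp f" by (auto simp: pa_supp_def pa_scale_def)
  ultimately show ?thesis unfolding pathalg_iff by (meson finite_subset subsetD)
qed

lemma sum_in_pathalg: "(\<And>i. i \<in> I \<Longrightarrow> h i \<in> A) \<Longrightarrow> (\<Sum>i\<in>I. h i) \<in> A"
  by (induction I rule: infinite_finite_induct) (auto simp: plus_in_pathalg)

lemma mul_path_basis_in_pathalg: "valid p \<Longrightarrow> valid q \<Longrightarrow> mul (b p) (b q) \<in> A"
  by (simp add: pa_mult_path_basis path_basis_in_pathalg valid_path_comp)

lemma mul_in_pathalg: "f \<in> A \<Longrightarrow> g \<in> A \<Longrightarrow> mul f g \<in> A"
  unfolding pathalg_iff[of f] pathalg_iff[of g]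
  by (auto simp: pa_mult_expand intro!: sum_in_pathalg pa_scale_in_pathalg mul_path_basis_in_pathalg)

lemma mul_vtx_vtx: "mul (e u) (e v) = (if u = v then e v else 0)"
  by (simp add: vtx_eq_path_basis pa_mult_path_basis composable_def path_end_def path_comp_def)

lemma pa_one_eq_sum_vtx: "pa_one V = (\<Sum>v\<in>V. e v)"
proof (rule ext)
  fix p :: "'v \<times> 'a list"
  have "(\<Sum>v\<in>V. e v p) = (\<Sum>v\<in>V. if v = fst p then (if snd p = [] then 1 else 0) else 0)"
    by (intro sum.cong) (auto simp: vtx_def prod_eq_iff)
  then show "pa_one V p = (\<Sum>v\<in>V. e v) p"
    using finite_V by (auto simp: sum_apply pa_one_def prod_eq_iff)
qed

definition pa_linear :: "(('v \<times> 'a list \<Rightarrow> 'k) \<Rightarrow> 'x) \<Rightarrow> bool" where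
  "pa_linear D \<longleftrightarrow> (\<forall>f\<in>A. \<forall>g\<in>A. D (f + g) = D f + D g) \<and> (\<forall>f\<in>A. \<forall>c. D (pa_scale c f) = sc c (D f))"

lemma pa_linear_zero: "pa_linear D \<Longrightarrow> D 0 = 0"
  unfolding pa_linear_def using pa_scale_zero[of 0] by (metis X.scale_zero_left zero_in_pathalg)

lemma pa_linear_sum:
  assumes "pa_linear D" "\<And>i. i \<in> I \<Longrightarrow> h i \<in> A"
  shows "D (\<Sum>i\<in>I. h i) = (\<Sum>i\<in>I. D (h i))"
  using assms(2)
proof (induction I rule: infinite_finite_induct)
  case (insert i I)
  have "D (\<Sum>i\<in>insert i I. h i) = D (h i + (\<Sum>i\<in>I. h i))"
    by (simp only: sum.insert[OF insert.hyps])
  also have "\<dots> = D (h i) + D (\<Sum>i\<in>I. h i)"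
    using assms(1) insert.prems sum_in_pathalg[of I h] by (simp add: pa_linear_def)
  also have "\<dots> = (\<Sum>i\<in>insert i I. D (h i))"
    using insert by (simp only: sum.insert[OF insert.hyps]) simp
  finally show ?case .
qed (simp_all add: pa_linear_zero[OF assms(1)])

lemma pa_linear_expand:
  assumes D: "pa_linear D" and f: "f \<in> A"
  shows "D f = (\<Sum>p\<in>pa_supp f. sc (f p) (D (b p)))"
proof -
  have P: "finite (pa_supp f)" "\<And>p. p \<in> pa_supp f \<Longrightarrow> valid p"
    using f by (auto simp: pathalg_iff)
  have "D f = D (\<Sum>p\<in>pa_supp f. pa_scale (f p) (b p))"
    using pa_expand[OF P(1) subset_refl] by simp
  also have "\<dots> = (\<Sum>p\<in>pa_supp f. sc (f p) (D (b p)))"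
    using D P(2) by (simp add: pa_linear_sum pa_scale_in_pathalg path_basis_in_pathalg)
      (simp add: pa_linear_def path_basis_in_pathalg)
  finally show ?thesis .
qed

lemma pa_linear_lact: "pa_linear (\<lambda>f. lact f m)"
  and pa_linear_ract: "pa_linear (\<lambda>f. ract m f)"
  by (simp_all add: pa_linear_def lact_plus ract_plus lact_pa_scale ract_pa_scale)

lemma lact_zero_left [simp]: "lact 0 m = 0"
  and ract_zero_right [simp]: "ract m 0 = 0"
  using pa_linear_zero[OF pa_linear_lact] pa_linear_zero[OF pa_linear_ract] by simp_all

lemma lact_zero: "f \<in> A \<Longrightarrow> lact f 0 = 0"
  using lact_add[of f 0 0] by simp

lemma ract_zero: "f \<in> A \<Longrightarrow> ract 0 f = 0"
  using ract_add[of f 0 0] by simp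

lemma lact_diff: "f \<in> A \<Longrightarrow> lact f (m - n) = lact f m - lact f n"
  by (metis add_diff_cancel_right' diff_add_cancel lact_add)

lemma ract_diff: "f \<in> A \<Longrightarrow> ract (m - n) f = ract m f - ract n f"
  by (metis add_diff_cancel_right' diff_add_cancel ract_add)

lemma lact_sum: "f \<in> A \<Longrightarrow> lact f (\<Sum>i\<in>I. x i) = (\<Sum>i\<in>I. lact f (x i))"
  by (induction I rule: infinite_finite_induct) (simp_all add: lact_zero lact_add)

lemma ract_sum: "f \<in> A \<Longrightarrow> ract (\<Sum>i\<in>I. x i) f = (\<Sum>i\<in>I. ract (x i) f)"
  by (induction I rule: infinite_finite_induct) (simp_all add: ract_zero ract_add)

lemma mul_vtx_path_basis: "mul (e u) (b p) = (if path_end tgt p = u then b p else 0)"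
  by (simp add: vtx_eq_path_basis pa_mult_path_basis composable_def path_comp_def)

lemma mul_path_basis_vtx: "mul (b p) (e u) = (if fst p = u then b p else 0)"
  by (cases p) (simp add: vtx_eq_path_basis pa_mult_path_basis composable_def path_comp_def path_end_def)

lemma mul_path_basis_Cons:
  "src \<alpha> = v \<Longrightarrow> mul (b (tgt \<alpha>, as)) (b (v, [\<alpha>])) = b (v, \<alpha> # as)"
  by (simp add: pa_mult_path_basis composable_def path_comp_def path_end_def)

lemma corner_iff:
  assumes "x \<in> V" "y \<in> V"
  shows "m \<in> corner vtx lact ract y x \<longleftrightarrow> lact (e y) m = m \<and> ract m (e x) = m"
proof
  assume "m \<in> corner vtx lact ract y x"
  then obtain n where n: "m = lact (e y) (ract n (e x))" by (auto simp: corner_def)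
  have "lact (e y) m = lact (mul (e y) (e y)) (ract n (e x))"
    using assms by (simp add: n lact_mul vtx_in_pathalg)
  moreover have "ract m (e x) = lact (e y) (ract n (mul (e x) (e x)))"
    using assms by (simp add: n lact_ract ract_mul vtx_in_pathalg)
  ultimately show "lact (e y) m = m \<and> ract m (e x) = m"
    by (simp add: n mul_vtx_vtx)
next
  assume "lact (e y) m = m \<and> ract m (e x) = m"
  then have "m = lact (e y) (ract m (e x))" by simp
  then show "m \<in> corner vtx lact ract y x" unfolding corner_def by blast
qed

lemma subspace_corner:
  assumes "x \<in> V" "y \<in> V"
  shows "X.subspace (corner vtx lact ract y x)"
proof -
  interpret vector_space_pair sc sc ..
  have "Vector_Spaces.linear sc sc (\<lambda>m. lact (e y) (ract m (e x)))"
    using assms by (simp add: Vector_Spaces.linear_iff X.vector_space_axioms lact_add ract_add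
        lact_scale ract_scale vtx_in_pathalg)
  from linear_subspace_image[OF this X.subspace_UNIV] show ?thesis
    by (simp add: corner_def full_SetCompr_eq)
qed

section \<open>Derivations\<close>

abbreviation "Der \<equiv> derivations V Ar src tgt sc lact ract"

lemma derivations_iff:
  "D \<in> Der \<longleftrightarrow> (\<forall>f. f \<notin> A \<longrightarrow> D f = 0) \<and> pa_linear D
                  \<and> (\<forall>f\<in>A. \<forall>g\<in>A. D (mul f g) = ract (D f) g + lact f (D g))"
  by (auto simp: derivations_def Let_def pa_add_eq_plus pa_linear_def)

lemma derivation_outside: "D \<in> Der \<Longrightarrow> f \<notin> A \<Longrightarrow> D f = 0"
  and derivation_pa_linear: "D \<in> Der \<Longrightarrow> pa_linear D"
  and derivation_leibniz: "D \<in> Der \<Longrightarrow> f \<in> A \<Longrightarrow> g \<in> A \<Longrightarrow> D (mul f g) = ract (D f) g + lact f (D g)"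
  by (simp_all add: derivations_iff)

definition inner :: "'x \<Rightarrow> ('v \<times> 'a list \<Rightarrow> 'k) \<Rightarrow> 'x" where
  "inner m = (\<lambda>f. if f \<in> A then lact f m - ract m f else 0)"

lemma inner_derivations_eq: "inner_derivations V Ar src tgt lact ract = range inner"
  by (auto simp: inner_derivations_def inner_def)

lemma inner_in_derivations: "inner m \<in> Der"
  by (auto simp: derivations_iff pa_linear_def inner_def plus_in_pathalg pa_scale_in_pathalg
      mul_in_pathalg lact_plus ract_plus lact_pa_scale ract_pa_scale lact_mul ract_mul
      lact_diff ract_diff lact_ract X.scale_right_diff_distrib)

definition on_vertices :: "(('v \<times> 'a list \<Rightarrow> 'k) \<Rightarrow> 'x) \<Rightarrow> 'v \<Rightarrow> 'x" where
  "on_vertices D = (\<lambda>v. if v \<in> V then D (e v) else 0)"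

definition arrow :: "'a \<Rightarrow> 'v \<times> 'a list \<Rightarrow> 'k" where
  "arrow \<alpha> = b (src \<alpha>, [\<alpha>])"

definition on_arrows :: "(('v \<times> 'a list \<Rightarrow> 'k) \<Rightarrow> 'x) \<Rightarrow> 'a \<Rightarrow> 'x" where
  "on_arrows D = (\<lambda>\<alpha>. if \<alpha> \<in> Ar then D (arrow \<alpha>) else 0)"

lemma arrow_in_pathalg: "\<alpha> \<in> Ar \<Longrightarrow> arrow \<alpha> \<in> A"
  by (simp add: arrow_def path_basis_in_pathalg valid_path_def src_in_V)

lemma derivation_on_vertices_inner:
  assumes D: "D \<in> Der"
  shows "on_vertices D = on_vertices (inner (\<Sum>u\<in>V. lact (e u) (D (e u))))"
proof -
  let ?m = "\<Sum>u\<in>V. lact (e u) (D (e u))"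
  have "lact (e v) ?m - ract ?m (e v) = D (e v)" if v: "v \<in> V" for v
  proof -
    have left: "lact (e v) ?m = lact (e v) (D (e v))"
      using v finite_V by (simp add: lact_sum lact_mul[symmetric] vtx_in_pathalg mul_vtx_vtx
          lact_zero_left if_distrib[of "\<lambda>f. lact f _"] cong: if_cong)
    have summand: "lact (e u) (ract (D (e u)) (e v)) =
        (if u = v then lact (e v) (D (e v)) else 0) - lact (e u) (D (e v))" if u: "u \<in> V" for u
    proof -
      have "ract (D (e u)) (e v) = D (mul (e u) (e v)) - lact (e u) (D (e v))"
        using derivation_leibniz[OF D] u v by (simp add: vtx_in_pathalg)
      then show ?thesis
        using u v pa_linear_zero[OF derivation_pa_linear[OF D]]
        by (simp add: lact_zero lact_diff lact_mul[symmetric] vtx_in_pathalg mul_vtx_vtx)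
    qed
    have "ract ?m (e v) = (\<Sum>u\<in>V. lact (e u) (ract (D (e u)) (e v)))"
      by (simp add: ract_sum lact_ract vtx_in_pathalg v)
    also have "\<dots> = (\<Sum>u\<in>V. (if u = v then lact (e v) (D (e v)) else 0) - lact (e u) (D (e v)))"
      by (rule sum.cong[OF refl]) (rule summand)
    also have "\<dots> = lact (e v) (D (e v)) - lact (pa_one V) (D (e v))"
      using v finite_V by (simp add: sum_subtractf pa_one_eq_sum_vtx pa_linear_sum[OF pa_linear_lact]
          vtx_in_pathalg)
    finally have "ract ?m (e v) = lact (e v) (D (e v)) - D (e v)"
      by (simp add: lact_one)
    with left show ?thesis by simp
  qed
  then show ?thesis by (simp add: on_vertices_def inner_def vtx_in_pathalg fun_eq_iff)
qed

lemma on_vertices_eq_zero_iff: "on_vertices D = 0 \<longleftrightarrow> (\<forall>v\<in>V. D (e v) = 0)"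
  by (auto simp: on_vertices_def fun_eq_iff)

lemma on_arrows_eq_zero_iff: "on_arrows D = 0 \<longleftrightarrow> (\<forall>\<alpha>\<in>Ar. D (arrow \<alpha>) = 0)"
  by (auto simp: on_arrows_def fun_eq_iff)

lemma kernel_inner: "{m. inner m = 0} = invariants lact ract A"
  by (auto simp: inner_def invariants_def fun_eq_iff)

lemma kernel_on_vertices_inner:
  "{m. on_vertices (inner m) = 0} = invariants lact ract (vertex_subalg V Ar src tgt)"
proof (intro set_eqI iffI)
  fix m assume "m \<in> {m. on_vertices (inner m) = 0}"
  then have vertex: "lact (e v) m = ract m (e v)" if "v \<in> V" for v
    using that by (auto simp: on_vertices_def inner_def fun_eq_iff vtx_in_pathalg dest!: spec[of _ v])
  show "m \<in> invariants lact ract (vertex_subalg V Ar src tgt)"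
    unfolding invariants_def
  proof (intro CollectI ballI)
    fix f :: "'v \<times> 'a list \<Rightarrow> 'k" assume "f \<in> vertex_subalg V Ar src tgt"
    then have f: "f \<in> A" and trivial: "\<And>p. p \<in> pa_supp f \<Longrightarrow> snd p = [] \<and> fst p \<in> V"
      by (auto simp: vertex_subalg_def pathalg_def pa_supp_def valid_path_def)
    have "lact (b p) m = ract m (b p)" if "p \<in> pa_supp f" for p
      using trivial[OF that] vertex by (metis prod.collapse vtx_eq_path_basis)
    then show "lact f m = ract m f"
      using pa_linear_expand[OF pa_linear_lact f] pa_linear_expand[OF pa_linear_ract f]
      by (simp cong: sum.cong)
  qed
next
  fix m assume m: "m \<in> invariants lact ract (vertex_subalg V Ar src tgt)"
  have "e v \<in> vertex_subalg V Ar src tgt" if "v \<in> V" for v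
    using vtx_in_pathalg[OF that] by (simp add: vertex_subalg_def vtx_def)
  with m show "m \<in> {m. on_vertices (inner m) = 0}"
    by (auto simp: invariants_def on_vertices_def inner_def fun_eq_iff vtx_in_pathalg)
qed

lemma derivation_eq_zero:
  assumes D: "D \<in> Der" and vertices: "on_vertices D = 0" and arrows: "on_arrows D = 0"
  shows "D = 0"
proof -
  have path: "D (b (v, as)) = 0" if "valid (v, as)" for v as
    using that
  proof (induction as arbitrary: v)
    case Nil
    then show ?case
      using vertices by (simp add: valid_path_def on_vertices_eq_zero_iff vtx_eq_path_basis)
  next
    case (Cons \<alpha> as)
    then have \<alpha>: "\<alpha> \<in> Ar" "src \<alpha> = v" and as: "valid (tgt \<alpha>, as)"
      by (auto simp: valid_Cons_iff)
    have "D (arrow \<alpha>) = 0" using arrows \<alpha> by (simp add: on_arrows_eq_zero_iff)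
    then have "D (mul (b (tgt \<alpha>, as)) (arrow \<alpha>)) = 0"
      using derivation_leibniz[OF D path_basis_in_pathalg[OF as] arrow_in_pathalg[OF \<alpha>(1)]]
      by (simp add: Cons.IH[OF as] lact_zero ract_zero path_basis_in_pathalg[OF as]
          arrow_in_pathalg[OF \<alpha>(1)])
    then show ?case by (simp add: arrow_def mul_path_basis_Cons \<alpha>)
  qed
  show "D = 0"
  proof
    fix f
    show "D f = 0 f"
      using pa_linear_expand[OF derivation_pa_linear[OF D], of f] derivation_outside[OF D, of f]
      by (cases "f \<in> A") (auto simp: pathalg_iff path intro!: sum.neutral)
  qed
qed

definition arrow_corner :: "'a \<Rightarrow> 'x set" where
  "arrow_corner \<alpha> = corner vtx lact ract (tgt \<alpha>) (src \<alpha>)"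

lemma arrow_corner_iff:
  "\<alpha> \<in> Ar \<Longrightarrow> m \<in> arrow_corner \<alpha> \<longleftrightarrow> lact (e (tgt \<alpha>)) m = m \<and> ract m (e (src \<alpha>)) = m"
  by (simp add: arrow_corner_def corner_iff src_in_V tgt_in_V)

lemma on_arrows_in_corners:
  assumes D: "D \<in> Der" and vertices: "on_vertices D = 0"
  shows "on_arrows D \<in> Pi_zero Ar arrow_corner"
proof -
  have "D (arrow \<alpha>) \<in> arrow_corner \<alpha>" if \<alpha>: "\<alpha> \<in> Ar" for \<alpha>
  proof -
    have zero: "D (e (tgt \<alpha>)) = 0" "D (e (src \<alpha>)) = 0"
      using vertices \<alpha> by (simp_all add: on_vertices_eq_zero_iff src_in_V tgt_in_V)
    have "D (mul (e (tgt \<alpha>)) (arrow \<alpha>)) = lact (e (tgt \<alpha>)) (D (arrow \<alpha>))"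
      using derivation_leibniz[OF D vtx_in_pathalg[OF tgt_in_V[OF \<alpha>]] arrow_in_pathalg[OF \<alpha>]]
      by (simp add: zero ract_zero arrow_in_pathalg[OF \<alpha>])
    moreover have "D (mul (arrow \<alpha>) (e (src \<alpha>))) = ract (D (arrow \<alpha>)) (e (src \<alpha>))"
      using derivation_leibniz[OF D arrow_in_pathalg[OF \<alpha>] vtx_in_pathalg[OF src_in_V[OF \<alpha>]]]
      by (simp add: zero lact_zero arrow_in_pathalg[OF \<alpha>])
    ultimately show ?thesis
      using \<alpha> by (simp add: arrow_corner_iff arrow_def mul_vtx_path_basis mul_path_basis_vtx
          path_end_def)
  qed
  then show ?thesis by (auto simp: Pi_zero_def on_arrows_def)
qed

section \<open>Extending arrow data to a derivation\<close>

lemma leibniz_from_path_basis: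
  assumes D: "pa_linear D" and f: "f \<in> A" and g: "g \<in> A"
    and basis: "\<And>p q. valid p \<Longrightarrow> valid q \<Longrightarrow>
                  D (mul (b p) (b q)) = ract (D (b p)) (b q) + lact (b p) (D (b q))"
  shows "D (mul f g) = ract (D f) g + lact f (D g)"
proof -
  let ?F = "pa_supp f" and ?G = "pa_supp g"
  have F: "finite ?F" "\<And>p. p \<in> ?F \<Longrightarrow> valid p" and G: "finite ?G" "\<And>q. q \<in> ?G \<Longrightarrow> valid q"
    using f g by (auto simp: pathalg_iff)
  have "D (mul f g) = (\<Sum>p\<in>?F. \<Sum>q\<in>?G. sc (f p * g q) (D (mul (b p) (b q))))"
    using D F G
    by (simp add: pa_mult_expand pa_linear_sum sum_in_pathalg pa_scale_in_pathalg
        mul_path_basis_in_pathalg) (simp add: pa_linear_def mul_path_basis_in_pathalg)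
  also have "\<dots> = (\<Sum>p\<in>?F. \<Sum>q\<in>?G. sc (f p * g q) (ract (D (b p)) (b q)))
                + (\<Sum>p\<in>?F. \<Sum>q\<in>?G. sc (f p * g q) (lact (b p) (D (b q))))"
    using F G by (simp add: basis X.scale_right_distrib sum.distrib)
  also have "(\<Sum>p\<in>?F. \<Sum>q\<in>?G. sc (f p * g q) (ract (D (b p)) (b q))) = ract (D f) g"
  proof -
    have "ract (D f) g = (\<Sum>p\<in>?F. sc (f p) (ract (D (b p)) g))"
      using pa_linear_expand[OF D f] g by (simp add: ract_sum ract_scale)
    also have "\<dots> = (\<Sum>p\<in>?F. \<Sum>q\<in>?G. sc (f p * g q) (ract (D (b p)) (b q)))"
      using pa_linear_expand[OF pa_linear_ract g]
      by (simp add: X.scale_sum_right)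
    finally show ?thesis by simp
  qed
  also have "(\<Sum>p\<in>?F. \<Sum>q\<in>?G. sc (f p * g q) (lact (b p) (D (b q)))) = lact f (D g)"
  proof -
    have "lact f (D g) = (\<Sum>q\<in>?G. sc (g q) (lact f (D (b q))))"
      using pa_linear_expand[OF D g] f by (simp add: lact_sum lact_scale)
    also have "\<dots> = (\<Sum>q\<in>?G. \<Sum>p\<in>?F. sc (f p * g q) (lact (b p) (D (b q))))"
      using pa_linear_expand[OF pa_linear_lact f]
      by (simp add: X.scale_sum_right mult.commute)
    finally show ?thesis by (simp add: sum.swap[of _ ?G])
  qed
  finally show ?thesis .
qed

definition basis_extension :: "('v \<times> 'a list \<Rightarrow> 'x) \<Rightarrow> ('v \<times> 'a list \<Rightarrow> 'k) \<Rightarrow> 'x" where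
  "basis_extension d f = (if f \<in> A then (\<Sum>p\<in>pa_supp f. sc (f p) (d p)) else 0)"

lemma basis_extension_eq:
  assumes "f \<in> A" "finite P" "pa_supp f \<subseteq> P"
  shows "basis_extension d f = (\<Sum>p\<in>P. sc (f p) (d p))"
proof -
  have "(\<Sum>p\<in>P. sc (f p) (d p)) = (\<Sum>p\<in>pa_supp f. sc (f p) (d p))"
    by (rule sum.mono_neutral_right[OF assms(2,3)]) (auto simp: pa_supp_def)
  with assms(1) show ?thesis by (simp add: basis_extension_def)
qed

lemma pa_linear_basis_extension: "pa_linear (basis_extension d)"
  unfolding pa_linear_def
proof (intro conjI ballI allI)
  fix f g assume f: "f \<in> A" and g: "g \<in> A"
  let ?P = "pa_supp f \<union> pa_supp g"
  have "finite ?P" using f g by (simp add: pathalg_iff)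
  moreover have "pa_supp (f + g) \<subseteq> ?P" by (auto simp: pa_supp_def)
  ultimately show "basis_extension d (f + g) = basis_extension d f + basis_extension d g"
    using f g plus_in_pathalg[OF f g]
    by (simp add: basis_extension_eq[where P = ?P] X.scale_left_distrib sum.distrib)
next
  fix f c assume f: "f \<in> A"
  have "pa_supp (pa_scale c f) \<subseteq> pa_supp f" by (auto simp: pa_supp_def pa_scale_def)
  then show "basis_extension d (pa_scale c f) = sc c (basis_extension d f)"
    using f pa_scale_in_pathalg[OF f]
    by (simp add: basis_extension_eq[where P = "pa_supp f"] pathalg_iff X.scale_sum_right pa_scale_def)
qed

lemma basis_extension_path_basis:
  assumes "valid p"
  shows "basis_extension d (b p) = d p"
proof -
  have "pa_supp (b p) \<subseteq> {p}" by (auto simp: pa_supp_def path_basis_def)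
  from basis_extension_eq[OF path_basis_in_pathalg[OF assms] _ this] show ?thesis
    by (simp add: path_basis_def)
qed

text \<open>The recursion is the Leibniz rule for the factorisation of the path \<open>(v, \<alpha> # as)\<close>
  as \<open>(tgt \<alpha>, as)\<close> after \<open>\<alpha>\<close>.\<close>

fun path_deriv :: "('a \<Rightarrow> 'x) \<Rightarrow> 'v \<times> 'a list \<Rightarrow> 'x" where
  "path_deriv w (v, []) = 0"
| "path_deriv w (v, \<alpha> # as) = ract (path_deriv w (tgt \<alpha>, as)) (b (v, [\<alpha>])) + lact (b (tgt \<alpha>, as)) (w \<alpha>)"

definition arrow_extension :: "('a \<Rightarrow> 'x) \<Rightarrow> ('v \<times> 'a list \<Rightarrow> 'k) \<Rightarrow> 'x" where
  "arrow_extension w = basis_extension (path_deriv w)"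

lemma pa_linear_arrow_extension: "pa_linear (arrow_extension w)"
  by (simp add: arrow_extension_def pa_linear_basis_extension)

lemma arrow_extension_path_basis: "valid p \<Longrightarrow> arrow_extension w (b p) = path_deriv w p"
  by (simp add: arrow_extension_def basis_extension_path_basis)

context
  fixes w assumes w: "w \<in> Pi_zero Ar arrow_corner"
begin

lemma arrow_data_in_corner:
  "\<alpha> \<in> Ar \<Longrightarrow> lact (e (tgt \<alpha>)) (w \<alpha>) = w \<alpha> \<and> ract (w \<alpha>) (e (src \<alpha>)) = w \<alpha>"
  using w by (simp add: Pi_zero_def arrow_corner_iff)

lemma path_deriv_corner:
  "valid (v, as) \<Longrightarrow> lact (e (path_end tgt (v, as))) (path_deriv w (v, as)) = path_deriv w (v, as)
                      \<and> ract (path_deriv w (v, as)) (e v) = path_deriv w (v, as)"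
proof (induction as arbitrary: v)
  case Nil
  then show ?case by (simp add: valid_path_def lact_zero ract_zero vtx_in_pathalg path_end_def)
next
  case (Cons \<alpha> as)
  then have \<alpha>: "\<alpha> \<in> Ar" "src \<alpha> = v" and as: "valid (tgt \<alpha>, as)" by (auto simp: valid_Cons_iff)
  let ?E = "path_end tgt (tgt \<alpha>, as)" and ?d = "path_deriv w (tgt \<alpha>, as)"
  let ?\<alpha> = "b (v, [\<alpha>])" and ?as = "b (tgt \<alpha>, as)"
  have in_A: "e ?E \<in> A" "e v \<in> A" "?\<alpha> \<in> A" "?as \<in> A"
    using \<alpha> as valid_path_end[OF as]
    by (auto simp: vtx_in_pathalg path_basis_in_pathalg valid_path_def src_in_V)
  have IH: "lact (e ?E) ?d = ?d" using Cons.IH[OF as] by simp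
  have "lact (e ?E) (ract ?d ?\<alpha>) = ract ?d ?\<alpha>"
    using in_A by (simp add: lact_ract IH)
  moreover have "lact (e ?E) (lact ?as (w \<alpha>)) = lact ?as (w \<alpha>)"
    using in_A by (simp add: lact_mul[symmetric] mul_vtx_path_basis)
  moreover have "ract (ract ?d ?\<alpha>) (e v) = ract ?d ?\<alpha>"
    using in_A by (simp add: ract_mul[symmetric] mul_path_basis_vtx)
  moreover have "ract (lact ?as (w \<alpha>)) (e v) = lact ?as (w \<alpha>)"
    using in_A arrow_data_in_corner[OF \<alpha>(1)] \<alpha>(2) by (simp add: lact_ract[symmetric])
  ultimately show ?case
    using in_A by (simp add: path_end_Cons lact_add ract_add)
qed

lemma path_deriv_append:
  assumes p: "valid p"
  shows "valid (u, bs) \<Longrightarrow> composable tgt p (u, bs) \<Longrightarrow>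
    path_deriv w (u, bs @ snd p) = ract (path_deriv w p) (b (u, bs)) + lact (b p) (path_deriv w (u, bs))"
proof (induction bs arbitrary: u)
  case Nil
  then have "p = (u, snd p)" "u \<in> V"
    by (auto simp: composable_def path_end_def valid_path_def prod_eq_iff)
  then show ?case
    using path_deriv_corner[of u "snd p"] p
    by (simp add: vtx_eq_path_basis[symmetric] lact_zero path_basis_in_pathalg)
next
  case (Cons \<alpha> bs)
  then have \<alpha>: "\<alpha> \<in> Ar" "src \<alpha> = u" and bs: "valid (tgt \<alpha>, bs)"
    and comp: "composable tgt p (tgt \<alpha>, bs)"
    by (auto simp: valid_Cons_iff composable_def path_end_Cons)
  let ?d = "path_deriv w (tgt \<alpha>, bs)"
  let ?\<alpha> = "b (u, [\<alpha>])" and ?bs = "b (tgt \<alpha>, bs)" and ?p = "b p"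
  have in_A: "?\<alpha> \<in> A" "?bs \<in> A" "?p \<in> A"
    using \<alpha> bs p by (auto simp: path_basis_in_pathalg valid_path_def src_in_V)
  have "path_deriv w (u, (\<alpha> # bs) @ snd p)
      = ract (ract (path_deriv w p) ?bs) ?\<alpha> + ract (lact ?p ?d) ?\<alpha> + lact (mul ?p ?bs) (w \<alpha>)"
    using Cons.IH[OF bs comp] comp in_A
    by (simp add: ract_add pa_mult_path_basis path_comp_def)
  also have "\<dots> = ract (path_deriv w p) (b (u, \<alpha> # bs)) + lact ?p (path_deriv w (u, \<alpha> # bs))"
    using in_A
    by (simp add: ract_mul[symmetric] mul_path_basis_Cons \<alpha>(2) lact_ract lact_mul lact_add add.assoc)
  finally show ?case .
qed

lemma path_deriv_not_composable:
  assumes p: "valid p" and q: "valid q" and "\<not> composable tgt p q"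
  shows "ract (path_deriv w p) (b q) = 0" and "lact (b p) (path_deriv w q) = 0"
proof -
  have ne: "path_end tgt q \<noteq> fst p" using assms(3) by (simp add: composable_def)
  have in_A: "e (fst p) \<in> A" "e (path_end tgt q) \<in> A" "b p \<in> A" "b q \<in> A"
    using p q valid_path_end[OF q]
    by (auto simp: vtx_in_pathalg path_basis_in_pathalg valid_path_def)
  have "ract (path_deriv w p) (b q) = ract (ract (path_deriv w p) (e (fst p))) (b q)"
    using path_deriv_corner[of "fst p" "snd p"] p by simp
  also have "\<dots> = 0"
    using in_A ne by (simp add: ract_mul[symmetric] mul_vtx_path_basis)
  finally show "ract (path_deriv w p) (b q) = 0" .
  have "lact (b p) (path_deriv w q) = lact (b p) (lact (e (path_end tgt q)) (path_deriv w q))"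
    using path_deriv_corner[of "fst q" "snd q"] q by simp
  also have "\<dots> = 0"
    using in_A ne by (simp add: lact_mul[symmetric] mul_path_basis_vtx)
  finally show "lact (b p) (path_deriv w q) = 0" .
qed

lemma arrow_extension_leibniz_path_basis:
  assumes p: "valid p" and q: "valid q"
  shows "arrow_extension w (mul (b p) (b q)) =
           ract (arrow_extension w (b p)) (b q) + lact (b p) (arrow_extension w (b q))"
proof (cases "composable tgt p q")
  case True
  then have "arrow_extension w (mul (b p) (b q)) = path_deriv w (path_comp p q)"
    by (simp add: pa_mult_path_basis arrow_extension_path_basis valid_path_comp p q)
  then show ?thesis
    using path_deriv_append[OF p, of "fst q" "snd q"] True p q
    by (simp add: arrow_extension_path_basis path_comp_def)
next
  case False
  then show ?thesis
    using path_deriv_not_composable[OF p q] pa_linear_zero[OF pa_linear_arrow_extension]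
    by (simp add: pa_mult_path_basis arrow_extension_path_basis p q)
qed

lemma arrow_extension_in_derivations: "arrow_extension w \<in> Der"
proof -
  have "arrow_extension w f = 0" if "f \<notin> A" for f
    using that by (simp add: arrow_extension_def basis_extension_def)
  then show ?thesis
    using leibniz_from_path_basis[OF pa_linear_arrow_extension _ _ arrow_extension_leibniz_path_basis]
    by (simp add: derivations_iff pa_linear_arrow_extension)
qed

lemma on_vertices_arrow_extension: "on_vertices (arrow_extension w) = 0"
  by (simp add: on_vertices_eq_zero_iff vtx_eq_path_basis arrow_extension_path_basis valid_path_def)

lemma on_arrows_arrow_extension: "on_arrows (arrow_extension w) = w"
proof
  fix \<alpha>
  show "on_arrows (arrow_extension w) \<alpha> = w \<alpha>"
    using w arrow_data_in_corner[of \<alpha>]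
    by (cases "\<alpha> \<in> Ar") (auto simp: on_arrows_def arrow_def arrow_extension_path_basis
        valid_path_def src_in_V vtx_eq_path_basis ract_zero path_basis_in_pathalg Pi_zero_def)
qed

end

section \<open>Counting dimensions\<close>

sublocale M: vector_space "fun_scale sc :: 'k \<Rightarrow> (('v \<times> 'a list \<Rightarrow> 'k) \<Rightarrow> 'x) \<Rightarrow> _"
  by (rule vector_space_fun_scale[OF X.vector_space_axioms])

sublocale MV: vector_space "fun_scale sc :: 'k \<Rightarrow> ('v \<Rightarrow> 'x) \<Rightarrow> _"
  by (rule vector_space_fun_scale[OF X.vector_space_axioms])

sublocale MA: vector_space "fun_scale sc :: 'k \<Rightarrow> ('a \<Rightarrow> 'x) \<Rightarrow> _"
  by (rule vector_space_fun_scale[OF X.vector_space_axioms])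

lemma linear_inner: "Vector_Spaces.linear sc (fun_scale sc) inner"
  by (simp add: Vector_Spaces.linear_iff X.vector_space_axioms M.vector_space_axioms fun_eq_iff
      inner_def fun_scale_def lact_add ract_add lact_scale ract_scale X.scale_right_diff_distrib)

lemma linear_on_vertices: "Vector_Spaces.linear (fun_scale sc) (fun_scale sc) on_vertices"
  unfolding on_vertices_def[abs_def] by (rule linear_sampling[OF X.vector_space_axioms])

lemma linear_on_arrows: "Vector_Spaces.linear (fun_scale sc) (fun_scale sc) on_arrows"
  unfolding on_arrows_def[abs_def] by (rule linear_sampling[OF X.vector_space_axioms])

lemma subspace_derivations: "M.subspace Der"
proof (rule M.subspaceI)
  show "0 \<in> Der" by (simp add: derivations_iff pa_linear_def lact_zero ract_zero)
  show "D + D' \<in> Der" if "D \<in> Der" "D' \<in> Der" for D D'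
    using that unfolding derivations_iff pa_linear_def
    by (simp add: X.scale_right_distrib ract_add lact_add algebra_simps)
  show "fun_scale sc c D \<in> Der" if "D \<in> Der" for c D
    using that unfolding derivations_iff pa_linear_def
    by (simp add: fun_scale_def X.scale_right_distrib ract_scale lact_scale X.scale_left_commute)
qed

lemma finitely_spanned_if_fin_dim: "fin_dim sc \<Longrightarrow> finitely_spanned sc S"
  unfolding fin_dim_def finitely_spanned_def by blast

lemma rank_nullity_inner:
  assumes "fin_dim sc"
  shows "X.dim (UNIV :: 'x set) = M.dim (range inner) + X.dim (invariants lact ract A)"
proof -
  interpret vector_space_pair sc "fun_scale sc :: 'k \<Rightarrow> (('v \<times> 'a list \<Rightarrow> 'k) \<Rightarrow> 'x) \<Rightarrow> _" ..
  show ?thesis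
    using rank_nullity(1)[OF linear_inner X.subspace_UNIV]
      finitely_spanned_image[OF linear_inner] finitely_spanned_if_fin_dim[OF assms]
    by (simp add: kernel_inner)
qed

lemma rank_nullity_on_vertices_inner:
  assumes "fin_dim sc"
  shows "X.dim (UNIV :: 'x set) = MV.dim (on_vertices ` range inner)
           + X.dim (invariants lact ract (vertex_subalg V Ar src tgt))"
proof -
  interpret vector_space_pair sc "fun_scale sc :: 'k \<Rightarrow> ('v \<Rightarrow> 'x) \<Rightarrow> _" ..
  note linear = Vector_Spaces.linear_compose[OF linear_inner linear_on_vertices]
  show ?thesis
    using rank_nullity(1)[OF linear X.subspace_UNIV]
      finitely_spanned_image[OF linear] finitely_spanned_if_fin_dim[OF assms]
    by (simp add: kernel_on_vertices_inner image_comp)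
qed

lemma dim_derivations_vanishing_on_vertices:
  assumes "fin_dim sc"
  shows "M.dim (Der \<inter> {D. on_vertices D = 0}) = (\<Sum>\<alpha>\<in>Ar. X.dim (arrow_corner \<alpha>))"
    and "finitely_spanned (fun_scale sc) (Der \<inter> {D. on_vertices D = 0})"
proof -
  interpret vector_space_pair "fun_scale sc :: 'k \<Rightarrow> (('v \<times> 'a list \<Rightarrow> 'k) \<Rightarrow> 'x) \<Rightarrow> _"
    "fun_scale sc :: 'k \<Rightarrow> ('a \<Rightarrow> 'x) \<Rightarrow> _" ..
  interpret vertices: vector_space_pair "fun_scale sc :: 'k \<Rightarrow> (('v \<times> 'a list \<Rightarrow> 'k) \<Rightarrow> 'x) \<Rightarrow> _"
    "fun_scale sc :: 'k \<Rightarrow> ('v \<Rightarrow> 'x) \<Rightarrow> _" ..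
  let ?D0 = "Der \<inter> {D. on_vertices D = 0}"
  have subspace: "M.subspace ?D0"
    using M.subspace_inter[OF subspace_derivations vertices.linear_subspace_kernel[OF linear_on_vertices]]
    by (simp add: Collect_conj_eq)
  have kernel: "?D0 \<inter> {D. on_arrows D = 0} = {0}"
    using derivation_eq_zero M.subspace_0[OF subspace] linear_0[OF linear_on_arrows] by auto
  have image: "on_arrows ` ?D0 = Pi_zero Ar arrow_corner"
  proof
    show "on_arrows ` ?D0 \<subseteq> Pi_zero Ar arrow_corner"
      using on_arrows_in_corners by blast
    show "Pi_zero Ar arrow_corner \<subseteq> on_arrows ` ?D0"
    proof
      fix w assume w: "w \<in> Pi_zero Ar arrow_corner"
      then have "arrow_extension w \<in> ?D0"
        by (simp add: arrow_extension_in_derivations on_vertices_arrow_extension)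
      with on_arrows_arrow_extension[OF w] show "w \<in> on_arrows ` ?D0"
        by (metis image_eqI)
    qed
  qed
  have corners: "\<And>\<alpha>. \<alpha> \<in> Ar \<Longrightarrow> X.subspace (arrow_corner \<alpha>) \<and> finitely_spanned sc (arrow_corner \<alpha>)"
    using finitely_spanned_if_fin_dim[OF assms]
    by (simp add: arrow_corner_def subspace_corner src_in_V tgt_in_V)
  note Pi = dim_Pi_zero[OF X.vector_space_axioms finite_Ar, of arrow_corner, OF corners]
  have "finitely_spanned (fun_scale sc) {0 :: ('v \<times> 'a list \<Rightarrow> 'k) \<Rightarrow> 'x}"
    unfolding finitely_spanned_def using M.span_zero by blast
  note rank = rank_nullity[OF linear_on_arrows subspace, unfolded kernel image, OF this Pi(2)]
  show "M.dim ?D0 = (\<Sum>\<alpha>\<in>Ar. X.dim (arrow_corner \<alpha>))"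
    using rank(1) Pi(1) by (simp add: M.dim_zero_singleton)
  show "finitely_spanned (fun_scale sc) ?D0"
    by (rule rank(2))
qed

lemma dim_derivations:
  assumes "fin_dim sc"
  shows "M.dim Der = MV.dim (on_vertices ` range inner) + (\<Sum>\<alpha>\<in>Ar. X.dim (arrow_corner \<alpha>))"
proof -
  interpret vector_space_pair "fun_scale sc :: 'k \<Rightarrow> (('v \<times> 'a list \<Rightarrow> 'k) \<Rightarrow> 'x) \<Rightarrow> _"
    "fun_scale sc :: 'k \<Rightarrow> ('v \<Rightarrow> 'x) \<Rightarrow> _" ..
  interpret inner: vector_space_pair sc "fun_scale sc :: 'k \<Rightarrow> (('v \<times> 'a list \<Rightarrow> 'k) \<Rightarrow> 'x) \<Rightarrow> _" ..
  have image: "on_vertices ` Der = on_vertices ` range inner"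
    using derivation_on_vertices_inner inner_in_derivations by blast
  have "finitely_spanned (fun_scale sc) (on_vertices ` range inner)"
    using finitely_spanned_image[OF linear_on_vertices
        inner.finitely_spanned_image[OF linear_inner finitely_spanned_if_fin_dim[OF assms]]] .
  with rank_nullity(1)[OF linear_on_vertices subspace_derivations
      dim_derivations_vanishing_on_vertices(2)[OF assms]]
  show ?thesis
    by (simp add: image dim_derivations_vanishing_on_vertices(1)[OF assms] Collect_conj_eq)
qed

lemma H1_dim_eq:
  assumes "fin_dim sc"
  shows "H1_dim V Ar src tgt sc lact ract =
           int (X.dim (invariants lact ract A))
         - int (X.dim (invariants lact ract (vertex_subalg V Ar src tgt)))
         + (\<Sum>\<alpha>\<in>Ar. int (X.dim (arrow_corner \<alpha>)))"
  using dim_derivations[OF assms] rank_nullity_inner[OF assms] rank_nullity_on_vertices_inner[OF assms]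
  by (simp add: H1_dim_def inner_derivations_eq)

end

lemma sum_by_endpoints:
  fixes h :: "'v \<Rightarrow> 'v \<Rightarrow> 'b::comm_semiring_1"
  assumes "finite Ar" "finite V" "src ` Ar \<subseteq> V" "tgt ` Ar \<subseteq> V"
  shows "(\<Sum>\<alpha>\<in>Ar. h (src \<alpha>) (tgt \<alpha>))
           = (\<Sum>x\<in>V. \<Sum>y\<in>V. of_nat (card {\<alpha> \<in> Ar. src \<alpha> = x \<and> tgt \<alpha> = y}) * h x y)"
proof -
  have "(\<Sum>\<alpha>\<in>Ar. h (src \<alpha>) (tgt \<alpha>))
      = (\<Sum>z\<in>V \<times> V. \<Sum>\<alpha>\<in>{\<alpha> \<in> Ar. (src \<alpha>, tgt \<alpha>) = z}. h (src \<alpha>) (tgt \<alpha>))"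
    by (rule sum.group[symmetric]) (use assms in auto)
  also have "\<dots> = (\<Sum>z\<in>V \<times> V. of_nat (card {\<alpha> \<in> Ar. src \<alpha> = fst z \<and> tgt \<alpha> = snd z})
                                  * h (fst z) (snd z))"
  proof (rule sum.cong[OF refl])
    fix z :: "'v \<times> 'v"
    have "(\<Sum>\<alpha>\<in>{\<alpha> \<in> Ar. (src \<alpha>, tgt \<alpha>) = z}. h (src \<alpha>) (tgt \<alpha>))
        = (\<Sum>\<alpha>\<in>{\<alpha> \<in> Ar. src \<alpha> = fst z \<and> tgt \<alpha> = snd z}. h (fst z) (snd z))"
      by (rule sum.cong) auto
    then show "(\<Sum>\<alpha>\<in>{\<alpha> \<in> Ar. (src \<alpha>, tgt \<alpha>) = z}. h (src \<alpha>) (tgt \<alpha>))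
        = of_nat (card {\<alpha> \<in> Ar. src \<alpha> = fst z \<and> tgt \<alpha> = snd z}) * h (fst z) (snd z)"
      by simp
  qed
  finally show ?thesis by (simp add: sum.cartesian_product case_prod_beta)
qed

theorem corollary4p6:
  fixes V :: "'v set" and Ar :: "'a set" and src tgt :: "'a \<Rightarrow> 'v"
    and sc :: "'k::field \<Rightarrow> 'x::ab_group_add \<Rightarrow> 'x"
    and lact :: "('v \<times> 'a list \<Rightarrow> 'k) \<Rightarrow> 'x \<Rightarrow> 'x"
    and ract :: "'x \<Rightarrow> ('v \<times> 'a list \<Rightarrow> 'k) \<Rightarrow> 'x"
  assumes "quiver V Ar src tgt"
    and "pa_bimodule V Ar src tgt sc lact ract"
    and "fin_dim sc"
  shows "H1_dim V Ar src tgt sc lact ract =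
           int (vector_space.dim sc (invariants lact ract (pathalg V Ar src tgt)))
         - int (vector_space.dim sc (invariants lact ract (vertex_subalg V Ar src tgt)))
         + (\<Sum>x\<in>V. \<Sum>y\<in>V. int (card {\<alpha> \<in> Ar. src \<alpha> = x \<and> tgt \<alpha> = y})
                             * int (vector_space.dim sc (corner vtx lact ract y x)))"
proof -
  interpret path_algebra_bimodule V Ar src tgt sc lact ract
    using assms(1,2) by unfold_locales
  have "(\<Sum>\<alpha>\<in>Ar. int (X.dim (arrow_corner \<alpha>)))
      = (\<Sum>x\<in>V. \<Sum>y\<in>V. int (card {\<alpha> \<in> Ar. src \<alpha> = x \<and> tgt \<alpha> = y})
                       * int (X.dim (corner vtx lact ract y x)))"
    unfolding arrow_corner_def
    by (rule sum_by_endpoints[of Ar V src tgt "\<lambda>x y. int (X.dim (corner vtx lact ract y x))"])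
       (use quiver in \<open>auto simp: quiver_def\<close>)
  with H1_dim_eq[OF assms(3)] show ?thesis by simp
qed

end
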